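(* Let $A$ be a monounary algebra. Then there is $B\in\mathbf R(A)\cap\mathcal U^\bigstar_\bigstar$ such that $\mathbf V(A)=\mathbf V(B)$.
   Context: A monounary algebra is a pair $(A,f)$ with $A$ a nonempty set and $f:A\to A$; direct products are coordinatewise. A monounary algebra is connected if for all $x,y$ there are $m,n\ge0$ with $f^m(x)=f^n(y)$; connected components are the maximal connected subalgebras. A retract of $A$ is a nonempty subalgebra $M$ such that there is an endomorphism $h:A\to M$ with $h|_M=\mathrm{id}$. $\mathbf R(A)$ is the class of algebras isomorphic to a retract of $A$. A retract variety is a class closed under isomorphisms, retracts and direct products; $\mathbf V(\mathcal K)$ is the smallest retract variety containing $\mathcal K$. Condition ($\bigstar\bigstar$) on $A$: among any three pairwise isomorphic connected components $C_1,C_2,C_3$ of $A$ at most two are distinct, i.e. $|\{C_1,C_2,C_3\}|\le2$; $\mathcal U^\bigstar_\bigstar$ is the class of monounary algebras satisfying it. *)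

theory Defs
  imports "HOL-Library.FuncSet"
begin

definition monounary :: "'a set \<Rightarrow> ('a \<Rightarrow> 'a) \<Rightarrow> bool" where
  "monounary A f \<longleftrightarrow> A \<noteq> {} \<and> (\<forall>x\<in>A. f x \<in> A)"

definition subalg :: "'a set \<Rightarrow> ('a \<Rightarrow> 'a) \<Rightarrow> 'a set \<Rightarrow> bool" where
  "subalg A f M \<longleftrightarrow> M \<noteq> {} \<and> M \<subseteq> A \<and> (\<forall>x\<in>M. f x \<in> M)"

definition mhom :: "'a set \<Rightarrow> ('a \<Rightarrow> 'a) \<Rightarrow> 'b set \<Rightarrow> ('b \<Rightarrow> 'b) \<Rightarrow> ('a \<Rightarrow> 'b) \<Rightarrow> bool" where
  "mhom A f B g h \<longleftrightarrow> (\<forall>x\<in>A. h x \<in> B) \<and> (\<forall>x\<in>A. h (f x) = g (h x))"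

definition miso :: "'a set \<Rightarrow> ('a \<Rightarrow> 'a) \<Rightarrow> 'b set \<Rightarrow> ('b \<Rightarrow> 'b) \<Rightarrow> bool" where
  "miso A f B g \<longleftrightarrow> (\<exists>h. mhom A f B g h \<and> bij_betw h A B)"

definition retract :: "'a set \<Rightarrow> ('a \<Rightarrow> 'a) \<Rightarrow> 'a set \<Rightarrow> bool" where
  "retract A f M \<longleftrightarrow> subalg A f M \<and> (\<exists>h. mhom A f M f h \<and> (\<forall>x\<in>M. h x = x))"

definition in_R :: "'a set \<Rightarrow> ('a \<Rightarrow> 'a) \<Rightarrow> 'b set \<Rightarrow> ('b \<Rightarrow> 'b) \<Rightarrow> bool" where
  "in_R A f B g \<longleftrightarrow> (\<exists>M. retract A f M \<and> miso B g M f)"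

definition connected_alg :: "'a set \<Rightarrow> ('a \<Rightarrow> 'a) \<Rightarrow> bool" where
  "connected_alg C f \<longleftrightarrow> (\<forall>x\<in>C. \<forall>y\<in>C. \<exists>m n. (f ^^ m) x = (f ^^ n) y)"

definition component :: "'a set \<Rightarrow> ('a \<Rightarrow> 'a) \<Rightarrow> 'a set \<Rightarrow> bool" where
  "component A f C \<longleftrightarrow> subalg A f C \<and> connected_alg C f \<and>
     (\<forall>D. subalg A f D \<and> connected_alg D f \<and> C \<subseteq> D \<longrightarrow> D = C)"

definition starstar :: "'a set \<Rightarrow> ('a \<Rightarrow> 'a) \<Rightarrow> bool" where
  "starstar A f \<longleftrightarrow> (\<forall>C1 C2 C3. component A f C1 \<and> component A f C2 \<and> component A f C3 \<and>
      miso C1 f C2 f \<and> miso C1 f C3 f \<and> miso C2 f C3 f \<longrightarrow> card {C1, C2, C3} \<le> 2)"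

definition pow_op :: "'i set \<Rightarrow> ('a \<Rightarrow> 'a) \<Rightarrow> ('i \<Rightarrow> 'a) \<Rightarrow> ('i \<Rightarrow> 'a)" where
  "pow_op I g = (\<lambda>x. restrict (\<lambda>i. g (x i)) I)"

text \<open>(A,f) \<in> V(B,g) = I R P(B,g): isomorphic to a retract of a direct power of (B,g).
  Index sets are taken from the (large) type 'a set set.\<close>
definition in_V :: "'a set \<Rightarrow> ('a \<Rightarrow> 'a) \<Rightarrow> 'a set \<Rightarrow> ('a \<Rightarrow> 'a) \<Rightarrow> bool" where
  "in_V B g A f \<longleftrightarrow> (\<exists>I :: 'a set set. in_R (PiE I (\<lambda>_. B)) (pow_op I g) A f)"

definition same_V :: "'a set \<Rightarrow> ('a \<Rightarrow> 'a) \<Rightarrow> 'a set \<Rightarrow> ('a \<Rightarrow> 'a) \<Rightarrow> bool" where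
  "same_V A f B g \<longleftrightarrow> in_V B g A f \<and> in_V A f B g"

end

theory Submission
  imports Defs
begin

text \<open>
  From every isomorphism class of connected components of \<open>A\<close> choose at most two
  representatives, two distinct ones whenever the class has at least two members, and let
  \<open>B\<close> be their union. Mapping each component isomorphically onto the first representative
  of its class is a retraction of \<open>A\<close> onto \<open>B\<close>, so \<open>B \<in> R(A)\<close> and \<open>V(B) \<subseteq> V(A)\<close>,
  and \<open>B\<close> satisfies (\<open>\<star>\<star>\<close>) by construction.

  Conversely, \<open>A\<close> embeds into \<open>B\<^sup>I\<close>, where \<open>I\<close> is the set of components of \<open>A\<close>: an element
  of the component \<open>D\<close> goes to the tuple whose \<open>i\<close>-th entry is its copy in the first
  representative of the class of \<open>D\<close> if \<open>i = D\<close> and in the second one otherwise. The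
  components visited by such a tuple determine \<open>D\<close>, so the tuple can be decoded by inverting
  one coordinate; this gives a retraction of \<open>B\<^sup>I\<close> onto the image of \<open>A\<close>, hence \<open>A \<in> V(B)\<close>.
\<close>

definition linked :: "('a \<Rightarrow> 'a) \<Rightarrow> 'a \<Rightarrow> 'a \<Rightarrow> bool" where
  "linked f u v \<longleftrightarrow> (\<exists>m n. (f ^^ m) u = (f ^^ n) v)"

lemma linked_refl: "linked f u u"
  unfolding linked_def by blast

lemma linked_sym: "linked f u v \<Longrightarrow> linked f v u"
  unfolding linked_def by metis

lemma linked_trans:
  assumes "linked f u v" and "linked f v w"
  shows "linked f u w"
proof -
  obtain m n where mn: "(f ^^ m) u = (f ^^ n) v" using assms(1) unfolding linked_def by blast
  obtain p q where pq: "(f ^^ p) v = (f ^^ q) w" using assms(2) unfolding linked_def by blast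
  have "(f ^^ (p + m)) u = (f ^^ p) ((f ^^ n) v)" using mn by (simp add: funpow_add)
  also have "\<dots> = (f ^^ n) ((f ^^ p) v)" by (metis comp_apply funpow_add add.commute)
  also have "\<dots> = (f ^^ (n + q)) w" using pq by (simp add: funpow_add)
  finally show ?thesis unfolding linked_def by blast
qed

lemma linked_step: "linked f u (f u)"
  unfolding linked_def by (rule exI[of _ 1], rule exI[of _ 0]) simp

lemma linked_f_left: "linked f (f u) v \<longleftrightarrow> linked f u v"
  by (meson linked_step linked_sym linked_trans)

lemma connected_alg_iff_linked: "connected_alg C f \<longleftrightarrow> (\<forall>x\<in>C. \<forall>y\<in>C. linked f x y)"
  unfolding connected_alg_def linked_def ..

lemma mhom_comp:
  assumes "mhom A f B g h" and "mhom B g C k h'"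
  shows "mhom A f C k (h' \<circ> h)"
  using assms unfolding mhom_def by auto

lemma mhom_inv_into:
  assumes "mhom A f B g h" and "bij_betw h A B" and "\<And>x. x \<in> A \<Longrightarrow> f x \<in> A"
  shows "mhom B g A f (inv_into A h)"
  unfolding mhom_def
proof (intro conjI ballI)
  fix y assume "y \<in> B"
  then obtain x where x: "x \<in> A" "y = h x" using assms(2) by (auto simp: bij_betw_def)
  have inj: "inj_on h A" using assms(2) by (simp add: bij_betw_def)
  show "inv_into A h y \<in> A" using x by (simp add: inv_into_into)
  have "inv_into A h (g y) = inv_into A h (h (f x))" using x assms(1) by (simp add: mhom_def)
  also have "\<dots> = f (inv_into A h y)" using inj assms(3) x by (simp add: inv_into_f_f)
  finally show "inv_into A h (g y) = f (inv_into A h y)" .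
qed

lemma miso_refl: "miso A f A f"
  unfolding miso_def mhom_def by (rule exI[of _ id]) auto

lemma miso_sym:
  assumes "miso A f B g" and "\<And>x. x \<in> A \<Longrightarrow> f x \<in> A"
  shows "miso B g A f"
proof -
  obtain h where "mhom A f B g h" "bij_betw h A B" using assms(1) unfolding miso_def by blast
  then show ?thesis unfolding miso_def using mhom_inv_into assms(2) bij_betw_inv_into by blast
qed

lemma miso_trans:
  assumes "miso A f B g" and "miso B g C k"
  shows "miso A f C k"
  using assms mhom_comp bij_betw_trans unfolding miso_def by metis

definition iso_map :: "'a set \<Rightarrow> ('a \<Rightarrow> 'a) \<Rightarrow> 'b set \<Rightarrow> ('b \<Rightarrow> 'b) \<Rightarrow> 'a \<Rightarrow> 'b" where
  "iso_map A f B g = (SOME h. mhom A f B g h \<and> bij_betw h A B)"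

lemma iso_map:
  assumes "miso A f B g"
  shows "mhom A f B g (iso_map A f B g)" and "bij_betw (iso_map A f B g) A B"
  using someI_ex[of "\<lambda>h. mhom A f B g h \<and> bij_betw h A B"] assms
  unfolding iso_map_def miso_def by blast+

lemma in_R_by_retraction:
  assumes X: "monounary X f" and e: "mhom X f Z k e" and p: "mhom Z k X f p"
    and p_e: "\<And>x. x \<in> X \<Longrightarrow> p (e x) = x"
  shows "in_R Z k X f"
  unfolding in_R_def
proof (intro exI conjI)
  show "retract Z k (e ` X)"
    unfolding retract_def subalg_def
  proof (intro conjI exI[of _ "e \<circ> p"] ballI)
    show "mhom Z k (e ` X) k (e \<circ> p)"
      using e p unfolding mhom_def by auto
    fix y assume "y \<in> e ` X"
    then obtain x where "x \<in> X" and "y = e x" by blast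
    then have "k y = e (f x)" and "f x \<in> X"
      using X e unfolding monounary_def mhom_def by auto
    then show "k y \<in> e ` X" by blast
  qed (use X e p_e in \<open>auto simp: monounary_def mhom_def\<close>)
  have "inj_on e X" using p_e by (rule inj_on_inverseI)
  then show "miso X f (e ` X) k"
    using e unfolding miso_def mhom_def bij_betw_def by auto
qed

lemma in_V_by_retraction:
  fixes X Y :: "'a set" and I :: "'a set set"
  assumes "monounary X f"
    and "mhom X f (PiE I (\<lambda>_. Y)) (pow_op I g) e" and "mhom (PiE I (\<lambda>_. Y)) (pow_op I g) X f p"
    and "\<And>x. x \<in> X \<Longrightarrow> p (e x) = x"
  shows "in_V Y g X f"
proof -
  have "in_R (PiE I (\<lambda>_. Y)) (pow_op I g) X f"
    by (rule in_R_by_retraction) (fact assms)+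
  then show ?thesis unfolding in_V_def by blast
qed

lemma in_V_of_retract:
  assumes "retract A f M"
  shows "in_V A f M f"
proof -
  obtain r where r: "mhom A f M f r" "\<And>x. x \<in> M \<Longrightarrow> r x = x" and M: "subalg A f M"
    using assms unfolding retract_def by blast
  let ?I = "{{}}"
  let ?e = "\<lambda>x. restrict (\<lambda>_. x) ?I" and ?p = "\<lambda>x. r (x {})"
  have e_hom: "mhom M f (PiE ?I (\<lambda>_. A)) (pow_op ?I f) ?e"
    unfolding mhom_def pow_op_def
  proof (intro conjI ballI)
    fix x assume "x \<in> M"
    then show "?e x \<in> PiE ?I (\<lambda>_. A)" using M unfolding subalg_def by auto
    show "?e (f x) = restrict (\<lambda>i. f (?e x i)) ?I" by (rule restrict_ext) simp
  qed
  have p_hom: "mhom (PiE ?I (\<lambda>_. A)) (pow_op ?I f) M f ?p"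
    unfolding mhom_def
  proof (intro conjI ballI)
    fix x assume "x \<in> PiE ?I (\<lambda>_. A)"
    then have "x {} \<in> A" by blast
    then show "?p x \<in> M" and "?p (pow_op ?I f x) = f (?p x)"
      using r(1) unfolding mhom_def pow_op_def by simp_all
  qed
  have mono: "monounary M f" using M unfolding subalg_def monounary_def by blast
  have p_e: "\<And>x. x \<in> M \<Longrightarrow> ?p (?e x) = x" using r(2) by simp
  show ?thesis
    by (rule in_V_by_retraction[where I = ?I and e = ?e and p = ?p]) (fact mono e_hom p_hom p_e)+
qed

definition first_rep :: "'b set \<Rightarrow> 'b" where
  "first_rep S = (SOME x. x \<in> S)"

definition second_rep :: "'b set \<Rightarrow> 'b" where
  "second_rep S = (SOME y. y \<in> S \<and> (y = first_rep S \<longrightarrow> S = {y}))"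

lemma first_rep_in: "S \<noteq> {} \<Longrightarrow> first_rep S \<in> S"
  unfolding first_rep_def by (simp add: some_in_eq)

lemma second_rep:
  assumes "S \<noteq> {}"
  shows "second_rep S \<in> S" and "second_rep S = first_rep S \<Longrightarrow> S = {first_rep S}"
proof -
  have "\<exists>y. y \<in> S \<and> (y = first_rep S \<longrightarrow> S = {y})"
  proof (cases "S = {first_rep S}")
    case False
    then obtain y where "y \<in> S" and "y \<noteq> first_rep S" using first_rep_in[OF assms] by blast
    then show ?thesis by blast
  qed blast
  then have "second_rep S \<in> S \<and> (second_rep S = first_rep S \<longrightarrow> S = {second_rep S})"
    unfolding second_rep_def by (rule someI_ex)
  then show "second_rep S \<in> S" and "second_rep S = first_rep S \<Longrightarrow> S = {first_rep S}"
    by auto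
qed

locale monounary_algebra =
  fixes A :: "'a set" and f :: "'a \<Rightarrow> 'a"
  assumes monounary: "monounary A f"
begin

lemma nonempty: "A \<noteq> {}" and closed: "x \<in> A \<Longrightarrow> f x \<in> A"
  using monounary unfolding monounary_def by auto

definition component_of :: "'a \<Rightarrow> 'a set" where
  "component_of a = {v \<in> A. linked f a v}"

lemma component_of_self: "a \<in> A \<Longrightarrow> a \<in> component_of a"
  unfolding component_of_def by (simp add: linked_refl)

lemma component_of_eq:
  assumes "v \<in> component_of a"
  shows "component_of v = component_of a"
proof -
  have "linked f a v" using assms unfolding component_of_def by blast
  then have "linked f v x \<longleftrightarrow> linked f a x" for x using linked_trans linked_sym by metis
  then show ?thesis unfolding component_of_def by simp
qed

lemma component_of_f: "component_of (f a) = component_of a"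
  unfolding component_of_def by (simp only: linked_f_left)

lemma subalg_component_of:
  assumes "a \<in> A"
  shows "subalg A f (component_of a)"
  unfolding subalg_def
proof (intro conjI ballI)
  show "component_of a \<noteq> {}" using component_of_self[OF assms] by blast
  show "component_of a \<subseteq> A" unfolding component_of_def by blast
  fix v assume "v \<in> component_of a"
  then have "v \<in> A" and "linked f a v" unfolding component_of_def by auto
  then show "f v \<in> component_of a"
    unfolding component_of_def by (simp add: closed linked_trans[OF _ linked_step])
qed

lemma connected_component_of: "connected_alg (component_of a) f"
  unfolding connected_alg_iff_linked
proof (intro ballI)
  fix x y assume "x \<in> component_of a" and "y \<in> component_of a"
  then have "linked f a x" and "linked f a y" unfolding component_of_def by simp_all
  then show "linked f x y" by (rule linked_trans[OF linked_sym])
qed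

lemma connected_subset_component_of:
  assumes "connected_alg C f" and "C \<subseteq> A" and "a \<in> C"
  shows "C \<subseteq> component_of a"
proof
  fix x assume "x \<in> C"
  then have "linked f a x" using assms(1,3) unfolding connected_alg_iff_linked by simp
  then show "x \<in> component_of a" using \<open>x \<in> C\<close> assms(2) unfolding component_of_def by auto
qed

lemma component_iff: "component A f C \<longleftrightarrow> (\<exists>a\<in>A. C = component_of a)"
proof
  assume C: "component A f C"
  then obtain a where a: "a \<in> C" and sub: "C \<subseteq> A" and conn: "connected_alg C f"
    unfolding component_def subalg_def by auto
  have maximal: "\<And>D. subalg A f D \<Longrightarrow> connected_alg D f \<Longrightarrow> C \<subseteq> D \<Longrightarrow> D = C"
    using C unfolding component_def by simp
  have "a \<in> A" using a sub by auto
  have "component_of a = C"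
    by (rule maximal[OF subalg_component_of[OF \<open>a \<in> A\<close>] connected_component_of
          connected_subset_component_of[OF conn sub a]])
  then show "\<exists>a\<in>A. C = component_of a" using \<open>a \<in> A\<close> by auto
next
  assume "\<exists>a\<in>A. C = component_of a"
  then obtain a where a: "a \<in> A" and C: "C = component_of a" by auto
  have "D = C" if D: "subalg A f D" "connected_alg D f" "C \<subseteq> D" for D
  proof -
    have "a \<in> D" using D(3) C component_of_self[OF a] by auto
    then have "D \<subseteq> C"
      using connected_subset_component_of[OF D(2)] D(1) C unfolding subalg_def by simp
    then show "D = C" using D(3) by (rule antisym)
  qed
  then show "component A f C"
    unfolding component_def using C subalg_component_of[OF a] connected_component_of by simp
qed

lemma component_eq:
  assumes "component A f C" and "a \<in> C"
  shows "C = component_of a"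
proof -
  obtain b where "C = component_of b" using assms(1) component_iff by auto
  then show ?thesis using assms(2) component_of_eq by simp
qed

lemma component_closed: "component A f C \<Longrightarrow> x \<in> C \<Longrightarrow> f x \<in> C"
  unfolding component_def subalg_def by auto

lemma component_subset: "component A f C \<Longrightarrow> C \<subseteq> A"
  unfolding component_def subalg_def by auto

lemma component_of_union:
  assumes comps: "\<And>D. D \<in> \<C> \<Longrightarrow> component A f D" and C: "component (\<Union>\<C>) f C"
  shows "C \<in> \<C>"
proof -
  have sub: "C \<subseteq> \<Union>\<C>" and conn: "connected_alg C f" and "C \<noteq> {}"
    using C unfolding component_def subalg_def by auto
  then obtain c where c: "c \<in> C" by auto
  then obtain D where D: "D \<in> \<C>" "c \<in> D" using sub by auto
  have D_comp: "component A f D" by (rule comps[OF D(1)])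
  have "\<Union>\<C> \<subseteq> A" using comps component_subset by auto
  then have "C \<subseteq> component_of c" using connected_subset_component_of[OF conn _ c] sub by auto
  also have "\<dots> = D" using component_eq[OF D_comp D(2)] by simp
  finally have "C \<subseteq> D" .
  moreover have "subalg (\<Union>\<C>) f D"
    using D D_comp component_closed unfolding subalg_def by auto
  moreover have "connected_alg D f" using D_comp unfolding component_def by simp
  ultimately have "D = C" using C unfolding component_def by simp
  then show ?thesis using D(1) by simp
qed

definition iso_type :: "'a set \<Rightarrow> 'a set set" where
  "iso_type D = {E. component A f E \<and> miso D f E f}"

lemma iso_type_eq:
  assumes "component A f D" and "E \<in> iso_type D"
  shows "iso_type E = iso_type D"
proof -
  have DE: "miso D f E f" using assms(2) unfolding iso_type_def by simp
  have ED: "miso E f D f" by (rule miso_sym[OF DE component_closed[OF assms(1)]])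
  have "miso E f X f \<longleftrightarrow> miso D f X f" for X
    using miso_trans[OF DE, of X f] miso_trans[OF ED, of X f] by (rule iffI)
  then show ?thesis unfolding iso_type_def by simp
qed

lemma self_in_iso_type: "component A f D \<Longrightarrow> D \<in> iso_type D"
  unfolding iso_type_def by (simp add: miso_refl)

lemma iso_type_component: "E \<in> iso_type D \<Longrightarrow> component A f E"
  unfolding iso_type_def by simp

definition rep1 :: "'a set \<Rightarrow> 'a set" where "rep1 D = first_rep (iso_type D)"
definition rep2 :: "'a set \<Rightarrow> 'a set" where "rep2 D = second_rep (iso_type D)"

lemma reps_in_iso_type:
  assumes "component A f D"
  shows "rep1 D \<in> iso_type D" and "rep2 D \<in> iso_type D"
proof -
  have ne: "iso_type D \<noteq> {}" using self_in_iso_type[OF assms] by auto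
  show "rep1 D \<in> iso_type D" unfolding rep1_def by (rule first_rep_in[OF ne])
  show "rep2 D \<in> iso_type D" unfolding rep2_def by (rule second_rep(1)[OF ne])
qed

lemma reps_eq:
  assumes "component A f D" and "E \<in> iso_type D"
  shows "rep1 E = rep1 D" and "rep2 E = rep2 D"
  unfolding rep1_def rep2_def iso_type_eq[OF assms] by (rule refl)+

lemma iso_type_singleton:
  assumes "component A f D" and "rep2 D = rep1 D"
  shows "iso_type D = {rep1 D}"
proof -
  have ne: "iso_type D \<noteq> {}" using self_in_iso_type[OF assms(1)] by auto
  show ?thesis using second_rep(2)[OF ne] assms(2) unfolding rep1_def rep2_def by simp
qed

definition rep_components :: "'a set set" where
  "rep_components = {D. component A f D \<and> D \<in> {rep1 D, rep2 D}}"

lemma reps_in_rep_components: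
  assumes "component A f D"
  shows "rep1 D \<in> rep_components" and "rep2 D \<in> rep_components"
  using reps_in_iso_type[OF assms] reps_eq[OF assms] iso_type_component
  unfolding rep_components_def by auto

definition reduced :: "'a set" where
  "reduced = \<Union>rep_components"

lemma reduced_subset: "reduced \<subseteq> A"
  unfolding reduced_def rep_components_def using component_subset by auto

lemma reduced_closed: "x \<in> reduced \<Longrightarrow> f x \<in> reduced"
  unfolding reduced_def rep_components_def using component_closed by auto

lemma mem_reduced_iff:
  assumes "a \<in> A"
  shows "a \<in> reduced \<longleftrightarrow> component_of a \<in> rep_components"
proof
  assume "a \<in> reduced"
  then obtain C where "C \<in> rep_components" and "a \<in> C" unfolding reduced_def by auto
  moreover from this have "C = component_of a"
    using component_eq unfolding rep_components_def by auto
  ultimately show "component_of a \<in> rep_components" by simp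
qed (use assms component_of_self in \<open>auto simp: reduced_def\<close>)

lemma monounary_reduced: "monounary reduced f"
proof -
  obtain a where "a \<in> A" using nonempty by auto
  then have "component A f (component_of a)" using component_iff by auto
  then have R: "rep1 (component_of a) \<in> rep_components" by (rule reps_in_rep_components)
  then have "component A f (rep1 (component_of a))" unfolding rep_components_def by simp
  then have "rep1 (component_of a) \<noteq> {}" unfolding component_def subalg_def by simp
  then have "reduced \<noteq> {}" using R unfolding reduced_def by auto
  then show ?thesis unfolding monounary_def using reduced_closed by simp
qed

definition retraction :: "'a \<Rightarrow> 'a" where
  "retraction a = (if a \<in> reduced then a
     else iso_map (component_of a) f (rep1 (component_of a)) f a)"

lemma retract_reduced: "retract A f reduced"
  unfolding retract_def
proof (intro conjI exI[of _ retraction])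
  show "subalg A f reduced"
    using monounary_reduced reduced_subset reduced_closed
    unfolding subalg_def monounary_def by simp
  show "\<forall>x\<in>reduced. retraction x = x" unfolding retraction_def by simp
  show "mhom A f reduced f retraction"
    unfolding mhom_def
  proof (intro conjI ballI)
    fix a assume a: "a \<in> A"
    let ?C = "component_of a"
    have C: "component A f ?C" using a component_iff by auto
    then have iso: "miso ?C f (rep1 ?C) f" using reps_in_iso_type unfolding iso_type_def by simp
    have "iso_map ?C f (rep1 ?C) f a \<in> rep1 ?C"
      using iso_map(1)[OF iso] component_of_self[OF a] unfolding mhom_def by simp
    then show "retraction a \<in> reduced"
      unfolding retraction_def reduced_def using reps_in_rep_components(1)[OF C] by auto
    have "f a \<in> reduced \<longleftrightarrow> a \<in> reduced"
      using mem_reduced_iff[OF a] mem_reduced_iff[OF closed[OF a]] component_of_f by simp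
    then show "retraction (f a) = f (retraction a)"
      using iso_map(1)[OF iso] component_of_self[OF a]
      unfolding retraction_def component_of_f mhom_def by simp
  qed
qed

lemma starstar_reduced: "starstar reduced f"
  unfolding starstar_def
proof (intro allI impI, elim conjE)
  fix C1 C2 C3
  have rep_comp: "\<And>D. D \<in> rep_components \<Longrightarrow> component A f D"
    unfolding rep_components_def by simp
  assume "component reduced f C1" "component reduced f C2" "component reduced f C3"
  then have C: "C1 \<in> rep_components" "C2 \<in> rep_components" "C3 \<in> rep_components"
    unfolding reduced_def by (simp_all add: component_of_union[OF rep_comp])
  have in_reps: "C \<in> {rep1 C1, rep2 C1}" if "C \<in> rep_components" and "miso C1 f C f" for C
  proof -
    have "C \<in> iso_type C1" using that rep_comp unfolding iso_type_def by simp
    then have "rep1 C = rep1 C1" and "rep2 C = rep2 C1" using reps_eq rep_comp[OF C(1)] by simp_all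
    moreover have "C \<in> {rep1 C, rep2 C}" using that(1) unfolding rep_components_def by simp
    ultimately show ?thesis by simp
  qed
  assume "miso C1 f C2 f" "miso C1 f C3 f"
  then have "{C1, C2, C3} \<subseteq> {rep1 C1, rep2 C1}"
    using in_reps[OF C(1) miso_refl] in_reps[OF C(2)] in_reps[OF C(3)] by simp
  then have "card {C1, C2, C3} \<le> card {rep1 C1, rep2 C1}" by (rule card_mono[rotated]) simp
  also have "\<dots> \<le> 2" by (simp add: card_insert_if)
  finally show "card {C1, C2, C3} \<le> 2" .
qed

definition components :: "'a set set" where
  "components = {D. component A f D}"

text \<open>The asymmetry between the coordinate \<open>D\<close> and all others is what makes \<open>block\<close> injective
  even when \<open>D\<close> has an isomorphic twin among the representatives.\<close>

definition target :: "'a set \<Rightarrow> 'a set \<Rightarrow> 'a set" where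
  "target D i = (if i = D then rep1 D else rep2 D)"

lemma target_in_iso_type: "component A f D \<Longrightarrow> target D i \<in> iso_type D"
  unfolding target_def using reps_in_iso_type by simp

lemma target_in_rep_components: "component A f D \<Longrightarrow> target D i \<in> rep_components"
  unfolding target_def using reps_in_rep_components by simp

definition block :: "'a set \<Rightarrow> 'a set \<Rightarrow> 'a set" where
  "block D = restrict (target D) components"

lemma block_inj:
  assumes D: "component A f D" and E: "component A f E" and eq: "block D = block E"
  shows "D = E"
proof (rule ccontr)
  assume "D \<noteq> E"
  have "target D i = target E i" if "component A f i" for i
    using fun_cong[OF eq, of i] that unfolding block_def components_def by simp
  from this[OF D] this[OF E] \<open>D \<noteq> E\<close> have "rep1 D = rep2 E" and "rep2 D = rep1 E"
    unfolding target_def by auto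
  have "iso_type E = iso_type (rep2 E)" using iso_type_eq[OF E reps_in_iso_type(2)[OF E]] by simp
  also have "\<dots> = iso_type D" using iso_type_eq[OF D reps_in_iso_type(1)[OF D]] \<open>rep1 D = rep2 E\<close> by simp
  finally have same: "iso_type E = iso_type D" .
  then have "rep2 D = rep1 D" using \<open>rep2 D = rep1 E\<close> unfolding rep1_def by simp
  then have "iso_type D = {rep1 D}" by (rule iso_type_singleton[OF D])
  moreover have "D \<in> iso_type D" and "E \<in> iso_type D"
    using self_in_iso_type[OF D] self_in_iso_type[OF E] same by simp_all
  ultimately show False using \<open>D \<noteq> E\<close> by simp
qed

definition target_iso :: "'a set \<Rightarrow> 'a set \<Rightarrow> 'a \<Rightarrow> 'a" where
  "target_iso D i = iso_map D f (target D i) f"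

lemma target_iso:
  assumes "component A f D"
  shows "mhom D f (target D i) f (target_iso D i)" and "bij_betw (target_iso D i) D (target D i)"
  using iso_map[of D f "target D i" f] target_in_iso_type[OF assms, of i]
  unfolding target_iso_def iso_type_def by simp_all

definition embed :: "'a \<Rightarrow> 'a set \<Rightarrow> 'a" where
  "embed a = restrict (\<lambda>i. target_iso (component_of a) i a) components"

lemma embed_hom: "mhom A f (PiE components (\<lambda>_. reduced)) (pow_op components f) embed"
  unfolding mhom_def
proof (intro conjI ballI)
  fix a assume a: "a \<in> A"
  let ?C = "component_of a"
  have C: "component A f ?C" using a component_iff by auto
  have hom: "mhom ?C f (target ?C i) f (target_iso ?C i)" for i by (rule target_iso(1)[OF C])
  have "target_iso ?C i a \<in> target ?C i" for i
    using hom component_of_self[OF a] unfolding mhom_def by simp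
  then have "target_iso ?C i a \<in> reduced" for i
    using target_in_rep_components[OF C] unfolding reduced_def by auto
  then show "embed a \<in> PiE components (\<lambda>_. reduced)"
    unfolding embed_def by (simp add: restrict_PiE_iff)
  have "target_iso ?C i (f a) = f (target_iso ?C i a)" for i
    using hom component_of_self[OF a] unfolding mhom_def by simp
  then show "embed (f a) = pow_op components f (embed a)"
    unfolding embed_def pow_op_def component_of_f by (intro restrict_ext) simp
qed

definition pattern :: "('a set \<Rightarrow> 'a) \<Rightarrow> 'a set \<Rightarrow> 'a set" where
  "pattern x = restrict (\<lambda>i. component_of (x i)) components"

lemma pattern_pow: "pattern (pow_op components f x) = pattern x"
  unfolding pattern_def pow_op_def by (intro restrict_ext) (simp add: component_of_f)

lemma pattern_embed:
  assumes "a \<in> A"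
  shows "pattern (embed a) = block (component_of a)"
  unfolding pattern_def block_def
proof (rule restrict_ext)
  let ?C = "component_of a"
  fix i assume "i \<in> components"
  have C: "component A f ?C" using assms component_iff by auto
  have "target_iso ?C i a \<in> target ?C i"
    using target_iso(1)[OF C] component_of_self[OF assms] unfolding mhom_def by simp
  moreover have "component A f (target ?C i)" by (rule iso_type_component[OF target_in_iso_type[OF C]])
  ultimately have "component_of (target_iso ?C i a) = target ?C i"
    using component_eq by simp
  then show "component_of (embed a i) = target ?C i" using \<open>i \<in> components\<close> unfolding embed_def by simp
qed

definition block_of :: "('a set \<Rightarrow> 'a) \<Rightarrow> 'a set" where
  "block_of x = (SOME D. component A f D \<and> pattern x = block D)"

lemma block_of:
  assumes "component A f D" and "pattern x = block D"
  shows "block_of x = D"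
proof -
  have "component A f (block_of x) \<and> pattern x = block (block_of x)"
    unfolding block_of_def by (rule someI[of _ D]) (simp add: assms)
  then show ?thesis using block_inj assms by simp
qed

definition base_index :: "'a set" where
  "base_index = (SOME D. component A f D)"

lemma component_base_index: "component A f base_index"
proof -
  obtain a where "a \<in> A" using nonempty by auto
  then have "component A f (component_of a)" using component_iff by auto
  then show ?thesis unfolding base_index_def by (rule someI)
qed

definition decode :: "'a set \<Rightarrow> 'a \<Rightarrow> 'a" where
  "decode D = inv_into D (target_iso D base_index)"

lemma decode_hom: "component A f D \<Longrightarrow> mhom (target D base_index) f D f (decode D)"
  unfolding decode_def using target_iso mhom_inv_into component_closed by blast

lemma decode_target_iso: "component A f D \<Longrightarrow> a \<in> D \<Longrightarrow> decode D (target_iso D base_index a) = a"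
  unfolding decode_def using target_iso(2) by (simp add: bij_betw_def inv_into_f_f)

definition project :: "('a set \<Rightarrow> 'a) \<Rightarrow> 'a" where
  "project x = (if \<exists>D. component A f D \<and> pattern x = block D
     then decode (block_of x) (x base_index) else x base_index)"

lemma project_hom: "mhom (PiE components (\<lambda>_. reduced)) (pow_op components f) A f project"
  unfolding mhom_def
proof (intro conjI ballI)
  fix x assume x: "x \<in> PiE components (\<lambda>_. reduced)"
  have i0: "base_index \<in> components" using component_base_index unfolding components_def by simp
  have x0: "x base_index \<in> A" using PiE_mem[OF x i0] reduced_subset by auto
  have pow0: "pow_op components f x base_index = f (x base_index)" using i0 unfolding pow_op_def by simp
  have "project x \<in> A \<and> project (pow_op components f x) = f (project x)"
  proof (cases "\<exists>D. component A f D \<and> pattern x = block D")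
    case True
    then obtain D where D: "component A f D" "pattern x = block D" by blast
    then have "block_of x = D" and "block_of (pow_op components f x) = D"
      using block_of pattern_pow by simp_all
    have "component_of (x base_index) = target D base_index"
      using fun_cong[OF D(2), of base_index] i0 unfolding pattern_def block_def by simp
    then have "x base_index \<in> target D base_index" using component_of_self[OF x0] by simp
    then have "decode D (x base_index) \<in> D" and "decode D (f (x base_index)) = f (decode D (x base_index))"
      using decode_hom[OF D(1)] unfolding mhom_def by simp_all
    then show ?thesis
      using True component_subset[OF D(1)] \<open>block_of x = D\<close> \<open>block_of (pow_op components f x) = D\<close>
      unfolding project_def pattern_pow pow0 by auto
  next
    case False
    then show ?thesis using x0 unfolding project_def pattern_pow pow0 if_not_P[OF False] by simp
  qed
  then show "project x \<in> A" and "project (pow_op components f x) = f (project x)" by simp_all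
qed

lemma project_embed:
  assumes "a \<in> A"
  shows "project (embed a) = a"
proof -
  let ?C = "component_of a"
  have C: "component A f ?C" using assms component_iff by auto
  have "block_of (embed a) = ?C" using block_of[OF C pattern_embed[OF assms]] .
  moreover have "embed a base_index = target_iso ?C base_index a"
    using component_base_index unfolding embed_def components_def by simp
  ultimately show ?thesis
    using C pattern_embed[OF assms] decode_target_iso[OF C component_of_self[OF assms]]
    unfolding project_def by auto
qed

lemma in_V_reduced: "in_V reduced f A f"
  by (rule in_V_by_retraction[where I = components])
    (fact monounary embed_hom project_hom project_embed)+

end

theorem lemma5p1:
  fixes A :: "'a set" and f :: "'a \<Rightarrow> 'a"
  assumes "monounary A f"
  shows "\<exists>(B :: 'a set) g. monounary B g \<and> in_R A f B g \<and> starstar B g \<and> same_V A f B g"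
proof -
  interpret monounary_algebra A f by (rule monounary_algebra.intro) (fact assms)
  show ?thesis
  proof (intro exI conjI)
    show "monounary reduced f" by (rule monounary_reduced)
    show "in_R A f reduced f" unfolding in_R_def using retract_reduced miso_refl by blast
    show "starstar reduced f" by (rule starstar_reduced)
    show "same_V A f reduced f"
      unfolding same_V_def using in_V_reduced in_V_of_retract[OF retract_reduced] by simp
  qed
qed

end
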